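(* Let $T(n) = (3n+1)/2^{v_2(3n+1)}$ for odd $n \ge 1$. Let $n = 64a + r$ with integer $a \ge 0$ and $r \in \{1,9,17,25,33,41,49,57\}$. Then: (i) if $r \in \{1,17,33,49\}$, then $T(n) \equiv 1 \pmod 4$ (the burst continues, $L \ge 2$); (ii) if $r \in \{9,41\}$, then $T(n) \equiv 3 \pmod 4$ (so $L = 1$), $n \equiv 9 \pmod{32}$, and $T(T(n)) \equiv 3 \pmod 4$ (so $G \ge 2$), for every $a$; (iii) if $r \in \{25,57\}$, then $T(n) \equiv 3 \pmod 4$ (so $L=1$), $n \equiv 25 \pmod{32}$, and $T(T(n)) \equiv 1 \pmod 4$ (so $G = 1$), for every $a$.
   Context: $v_2$ is the $2$-adic valuation. For the orbit $n, T(n), T^2(n),\dots$ with burst indicator $X_t = \mathbf{1}[T^t(n) \equiv 1 \pmod 4]$, $L$ is the length of the burst run starting at $n$ and $G$ the length of the subsequent gap run. *)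

theory Defs
  imports "HOL-Computational_Algebra.Computational_Algebra"
begin

definition v2 :: "nat \<Rightarrow> nat" where
  "v2 m = multiplicity (2::nat) m"

definition T :: "nat \<Rightarrow> nat" where
  "T n = (3 * n + 1) div 2 ^ v2 (3 * n + 1)"

end

theory Submission
  imports Defs
begin

text \<open>For \<open>n \<equiv> 1 (mod 8)\<close> one has \<open>3n + 1 \<equiv> 4 (mod 8)\<close>, so \<open>T n = (3n + 1)/4\<close> and
  \<open>T n mod 2^j\<close> is determined by \<open>n mod 2^(j + 2)\<close>; for \<open>m \<equiv> 3 (mod 4)\<close> one has \<open>T m = (3m + 1)/2\<close>,
  so \<open>T m mod 4\<close> is determined by \<open>m mod 8\<close>. Thus \<open>n mod 16\<close> decides whether \<open>T n \<equiv> 1 (mod 4)\<close>,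
  and when it is not, \<open>n mod 32\<close> fixes \<open>T n mod 8\<close> and hence \<open>T (T n) mod 4\<close>.\<close>

lemma v2_eqI:
  assumes "m = 2 ^ k * q" "odd q"
  shows "v2 m = k"
  unfolding v2_def using assms by (intro multiplicity_decomposeI) auto

lemma T_eqI:
  assumes "3 * n + 1 = 2 ^ k * q" "odd q"
  shows "T n = q"
  using assms v2_eqI[OF assms] unfolding T_def by simp

lemma T_8k_plus_1: "T (8 * k + 1) = 6 * k + 1"
  by (rule T_eqI[where k = 2]) auto

lemma T_4k_plus_3: "T (4 * k + 3) = 6 * k + 5"
  by (rule T_eqI[where k = 1]) auto

lemma T_mod_4_of_mod_16_eq_1:
  assumes "n mod 16 = 1"
  shows "T n mod 4 = 1"
proof -
  obtain k where "n = 8 * (2 * k) + 1"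
    using mult_div_mod_eq[of 16 n] assms by (intro that[of "n div 16"]) simp
  then have "T n = 6 * (2 * k) + 1"
    by (simp only: T_8k_plus_1)
  then show ?thesis by presburger
qed

lemma T_mod_8_of_mod_32_eq_9:
  assumes "n mod 32 = 9"
  shows "T n mod 8 = 7"
proof -
  obtain k where "n = 8 * (4 * k + 1) + 1"
    using mult_div_mod_eq[of 32 n] assms by (intro that[of "n div 32"]) simp
  then have "T n = 6 * (4 * k + 1) + 1"
    by (simp only: T_8k_plus_1)
  then show ?thesis by presburger
qed

lemma T_mod_8_of_mod_32_eq_25:
  assumes "n mod 32 = 25"
  shows "T n mod 8 = 3"
proof -
  obtain k where "n = 8 * (4 * k + 3) + 1"
    using mult_div_mod_eq[of 32 n] assms by (intro that[of "n div 32"]) simp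
  then have "T n = 6 * (4 * k + 3) + 1"
    by (simp only: T_8k_plus_1)
  then show ?thesis by presburger
qed

lemma T_mod_4_of_mod_8_eq_7:
  assumes "n mod 8 = 7"
  shows "T n mod 4 = 3"
proof -
  obtain k where "n = 4 * (2 * k + 1) + 3"
    using mult_div_mod_eq[of 8 n] assms by (intro that[of "n div 8"]) simp
  then have "T n = 6 * (2 * k + 1) + 5"
    by (simp only: T_4k_plus_3)
  then show ?thesis by presburger
qed

lemma T_mod_4_of_mod_8_eq_3:
  assumes "n mod 8 = 3"
  shows "T n mod 4 = 1"
proof -
  obtain k where "n = 4 * (2 * k) + 3"
    using mult_div_mod_eq[of 8 n] assms by (intro that[of "n div 8"]) simp
  then have "T n = 6 * (2 * k) + 5"
    by (simp only: T_4k_plus_3)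
  then show ?thesis by presburger
qed

lemma T_iterates_mod_4_of_mod_32_eq_9:
  assumes "n mod 32 = 9"
  shows "T n mod 4 = 3" "T (T n) mod 4 = 3"
proof -
  have "T n mod 8 = 7"
    using assms by (rule T_mod_8_of_mod_32_eq_9)
  then show "T n mod 4 = 3" "T (T n) mod 4 = 3"
    using mod_mod_cancel[of 4 8 "T n"] T_mod_4_of_mod_8_eq_7 by simp_all
qed

lemma T_iterates_mod_4_of_mod_32_eq_25:
  assumes "n mod 32 = 25"
  shows "T n mod 4 = 3" "T (T n) mod 4 = 1"
proof -
  have "T n mod 8 = 3"
    using assms by (rule T_mod_8_of_mod_32_eq_25)
  then show "T n mod 4 = 3" "T (T n) mod 4 = 1"
    using mod_mod_cancel[of 4 8 "T n"] T_mod_4_of_mod_8_eq_3 by simp_all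
qed

theorem proposition5p5:
  fixes a r n :: nat
  assumes hr: "r \<in> {1, 9, 17, 25, 33, 41, 49, 57}"
    and hn: "n = 64 * a + r"
  shows "(r \<in> {1, 17, 33, 49} \<longrightarrow> T n mod 4 = 1)
       \<and> (r \<in> {9, 41} \<longrightarrow> T n mod 4 = 3 \<and> n mod 32 = 9 \<and> T (T n) mod 4 = 3)
       \<and> (r \<in> {25, 57} \<longrightarrow> T n mod 4 = 3 \<and> n mod 32 = 25 \<and> T (T n) mod 4 = 1)"
proof -
  have "n mod 64 = r"
    using hr hn by auto
  then have "n mod 16 = r mod 16" "n mod 32 = r mod 32"
    using mod_mod_cancel[of 16 64 n] mod_mod_cancel[of 32 64 n] by simp_all
  then show ?thesis
    using T_mod_4_of_mod_16_eq_1[of n] T_iterates_mod_4_of_mod_32_eq_9[of n]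
      T_iterates_mod_4_of_mod_32_eq_25[of n]
    by auto
qed

end
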